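(* Let $n\ge1$, $0<k\le1$, $P\in\mathscr P_n$ and $Q(z)=z^n\overline{P(1/\overline{z})}$. Then for all $\alpha,\beta\in\mathbb C$ with $|\alpha|\le1$, $|\beta|\le1$, all $R>r\ge k$ and all $|z|\ge1$, writing $\Phi=\Phi_k(R,r,\alpha,\beta)$, $$\big|B[P\circ\sigma](z)+\Phi B[P\circ\rho](z)\big|+k^n\big|B[Q\circ\tau](z)+\Phi B[Q\circ\eta](z)\big|\le\left\{|\lambda_0|\,|1+\Phi|+\frac{|B[z^n]|}{k^n}\,|R^n+r^n\Phi|\right\}\max_{|z|=k}|P(z)|.$$
   Context: For an integer $n\ge1$, $\mathscr P_n$ denotes the set of complex polynomials of degree at most $n$. Fix complex numbers $\lambda_0,\lambda_1,\lambda_2$ such that all zeros of $U(z)=\lambda_0+n\lambda_1 z+\frac{n(n-1)}{2}\lambda_2 z^2$ lie in the half-plane $\{z\in\mathbb C:|z|\le|z-n/2|\}$. The operator $B$ (of the class $\mathcal B_n$) sends $P\in\mathscr P_n$ to $B[P](z)=\lambda_0P(z)+\lambda_1\frac{nz}{2}P'(z)+\lambda_2\left(\frac{nz}{2}\right)^2\frac{P''(z)}{2!}$. For a polynomial $P$ and a map $\rho$, $P\circ\rho$ denotes $z\mapsto P(\rho(z))$, and $B[P\circ\rho](z)$ is $B$ applied to the polynomial $P\circ\rho$, evaluated at $z$. $B[z^n]$ denotes $B$ applied to the monomial $z\mapsto z^n$, evaluated at the point $z$ under consideration; thus $|B[z^n]|=|z|^n\,|\lambda_0+\lambda_1 n^2/2+\lambda_2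 n^3(n-1)/8|$. For $k>0$, $R,r>0$ and $\alpha,\beta\in\mathbb C$: $\Phi_k(R,r,\alpha,\beta)=\beta\left\{\left(\frac{R+k}{k+r}\right)^n-|\alpha|\right\}-\alpha$; and $\sigma(z)=Rz$, $\rho(z)=rz$, $\tau(z)=Rz/k^2$, $\eta(z)=rz/k^2$. *)

theory Defs
  imports "HOL-Analysis.Analysis" "HOL-Computational_Algebra.Polynomial"
begin

definition Bop :: "complex \<Rightarrow> complex \<Rightarrow> complex \<Rightarrow> nat \<Rightarrow> complex poly \<Rightarrow> complex \<Rightarrow> complex" where
  "Bop l0 l1 l2 n P z =
     l0 * poly P z + l1 * (of_nat n * z / 2) * poly (pderiv P) z
     + l2 * (of_nat n * z / 2)^2 * poly (pderiv (pderiv P)) z / 2"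

definition Upoly :: "complex \<Rightarrow> complex \<Rightarrow> complex \<Rightarrow> nat \<Rightarrow> complex \<Rightarrow> complex" where
  "Upoly l0 l1 l2 n z = l0 + of_nat n * l1 * z + of_nat (n * (n - 1)) / 2 * l2 * z^2"

text \<open>Q(z) = z^n conj(P(1/conj z)) as a polynomial (P of degree at most n).\<close>
definition reflect_conj :: "nat \<Rightarrow> complex poly \<Rightarrow> complex poly" where
  "reflect_conj n P = (\<Sum>i\<le>n. monom (cnj (coeff P (n - i))) i)"

definition Phi :: "nat \<Rightarrow> real \<Rightarrow> real \<Rightarrow> real \<Rightarrow> complex \<Rightarrow> complex \<Rightarrow> complex" where
  "Phi n k R r \<alpha> \<beta> = \<beta> * complex_of_real (((R + k) / (k + r))^n - cmod \<alpha>) - \<alpha>"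

end

theory Submission
  imports Defs "HOL-Complex_Analysis.Complex_Analysis"
    "HOL-Computational_Algebra.Fundamental_Theorem_Algebra"
begin

text \<open>Write L f = B[f \<circ> \<sigma>](z) + \<Phi> B[f \<circ> \<rho>](z) and S = k^n Q(w/k^2), the reflection of P in
  the circle |w| = k. If F has degree n and all zeros in |w| < k, then F(Rw) + \<Phi> F(rw) has all
  zeros in |w| < 1 (this uses |\<Phi>| \<le> ((R+k)/(k+r))^n), and since B factors, via U, into at most
  two polar derivatives, Laguerre's theorem gives L F \<noteq> 0 for |z| \<ge> 1. The usual argument with
  f - \<mu> F turns this into a dominance principle: |f| \<le> |F| for |w| \<ge> k and
  |coeff f n| \<le> |coeff F n| imply |L f| \<le> |L F|.

  With M the maximum of |P| on |w| = k, dominance by M (w/k)^n bounds L S. For |\<omega>| > 1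
  the polynomial P - \<omega> M has no zeros in |w| \<le> k and is therefore dominated by its reflection
  S - conj \<omega> M (w/k)^n; choosing the argument of \<omega> and letting |\<omega>| \<rightarrow> 1 yields the bound for
  |L P| + |L S|.\<close>

section \<open>Maximum modulus and reflection in a circle\<close>

lemma norm_poly_le_on_cball:
  fixes f :: "complex poly"
  assumes "k > 0" and "\<And>w. cmod w = k \<Longrightarrow> cmod (poly f w) \<le> M" and "cmod u \<le> k"
  shows "cmod (poly f u) \<le> M"
  by (rule maximum_modulus_frontier[of "poly f" "cball 0 k"])
     (use assms in \<open>auto simp: frontier_cball intro!: holomorphic_intros continuous_intros\<close>)

lemma poly_eq_sum_atMost:
  fixes p :: "'a::comm_semiring_1 poly"
  assumes "degree p \<le> n"
  shows "poly p x = (\<Sum>i\<le>n. coeff p i * x ^ i)"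
proof -
  have "poly p x = (\<Sum>i\<le>degree p. coeff p i * x ^ i)" by (rule poly_altdef)
  also have "\<dots> = (\<Sum>i\<le>n. coeff p i * x ^ i)"
    by (rule sum.mono_neutral_left) (use assms in \<open>auto intro: le_degree\<close>)
  finally show ?thesis .
qed

lemma coeff_reflect_conj:
  "coeff (reflect_conj n g) i = (if i \<le> n then cnj (coeff g (n - i)) else 0)"
  by (simp add: reflect_conj_def coeff_sum coeff_monom)

lemma degree_reflect_conj: "degree (reflect_conj n g) \<le> n"
  by (rule degree_le) (simp add: coeff_reflect_conj)

lemma reflect_conj_0: "reflect_conj n 0 = 0"
  by (rule poly_eqI) (simp add: coeff_reflect_conj)

lemma poly_reflect_conj:
  assumes "degree g \<le> n" and "w \<noteq> 0"
  shows "poly (reflect_conj n g) w = w ^ n * cnj (poly g (1 / cnj w))"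
proof -
  have "poly (reflect_conj n g) w = (\<Sum>i\<le>n. cnj (coeff g (n - i)) * w ^ i)"
    by (subst poly_eq_sum_atMost[OF degree_reflect_conj]) (simp add: coeff_reflect_conj)
  also have "\<dots> = (\<Sum>j\<le>n. cnj (coeff g j) * w ^ (n - j))"
    by (rule sum.reindex_bij_witness[where i="\<lambda>i. n - i" and j="\<lambda>i. n - i"]) auto
  also have "\<dots> = (\<Sum>j\<le>n. w ^ n * (cnj (coeff g j) * (1 / w) ^ j))"
    by (intro sum.cong refl) (use assms in \<open>simp add: power_diff field_simps\<close>)
  also have "\<dots> = w ^ n * cnj (poly g (1 / cnj w))"
    by (subst poly_eq_sum_atMost[OF assms(1)]) (simp add: sum_distrib_left)
  finally show ?thesis .
qed

text \<open>The polynomial k^n Q(w/k^2) of the paper, where Q is reflect_conj n g: the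
  reflection of g in the circle |w| = k.\<close>
definition reflect_circle :: "real \<Rightarrow> nat \<Rightarrow> complex poly \<Rightarrow> complex poly" where
  "reflect_circle k n g = smult (of_real (k ^ n)) (reflect_conj n g \<circ>\<^sub>p [:0, of_real (1 / k^2):])"

lemma coeff_reflect_circle:
  "coeff (reflect_circle k n g) i =
     (if i \<le> n then of_real (k ^ n) * of_real (1 / k^2) ^ i * cnj (coeff g (n - i)) else 0)"
  by (simp add: reflect_circle_def coeff_pcompose_linear coeff_reflect_conj)

lemma degree_reflect_circle: "degree (reflect_circle k n g) \<le> n"
  by (rule degree_le) (simp add: coeff_reflect_circle)

lemma coeff_reflect_circle_top:
  "k > 0 \<Longrightarrow> coeff (reflect_circle k n g) n = cnj (poly g 0) / of_real (k ^ n)"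
  by (simp add: coeff_reflect_circle poly_0_coeff_0 field_simps power_mult_distrib mult_2_right
      power_add flip: power_mult)

lemma poly_reflect_circle_0: "poly (reflect_circle k n g) 0 = of_real (k ^ n) * cnj (coeff g n)"
  by (simp add: poly_0_coeff_0 coeff_reflect_circle)

lemma reflect_circle_reflect_circle:
  assumes "k > 0" and "degree g \<le> n"
  shows "reflect_circle k n (reflect_circle k n g) = g"
proof (rule poly_eqI)
  fix i
  show "coeff (reflect_circle k n (reflect_circle k n g)) i = coeff g i"
  proof (cases "i \<le> n")
    case True
    have "(k ^ n) * (1 / k^2) ^ i * (k ^ n * (1 / k^2) ^ (n - i)) = k ^ (n + n) / k ^ (2 * (i + (n - i)))"
      by (simp add: power_add power_mult_distrib power_divide field_simps flip: power_mult)
    also have "\<dots> = 1" using True assms(1) by (simp add: mult_2)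
    finally have "(of_real (k ^ n) * of_real (1 / k^2) ^ i * (of_real (k ^ n) * of_real (1 / k^2) ^ (n - i)) :: complex) = 1"
      by (metis of_real_1 of_real_mult of_real_power)
    then show ?thesis using True by (simp add: coeff_reflect_circle mult_ac)
  next
    case False
    then show ?thesis using assms(2) by (simp add: coeff_reflect_circle coeff_eq_0)
  qed
qed

lemma reflect_circle_diff_const:
  assumes "k > 0"
  shows "reflect_circle k n (g - [:c:]) = reflect_circle k n g - smult (cnj c / of_real (k ^ n)) (monom 1 n)"
proof (rule poly_eqI)
  fix i
  show "coeff (reflect_circle k n (g - [:c:])) i
      = coeff (reflect_circle k n g - smult (cnj c / of_real (k ^ n)) (monom 1 n)) i"
    using assms
    by (auto simp: coeff_reflect_circle coeff_monom field_simps power_mult_distrib coeff_pCons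
        mult_2_right power_add split: nat.splits simp flip: power_mult)
qed

lemma pcompose_reflect_circle:
  assumes "k > 0"
  shows "reflect_circle k n g \<circ>\<^sub>p [:0, of_real c:]
       = smult (of_real (k ^ n)) (reflect_conj n g \<circ>\<^sub>p [:0, of_real (c / k^2):])"
  by (simp add: reflect_circle_def pcompose_smult pcompose_pCons flip: pcompose_assoc)

lemma circle_inversion_norm: "k > 0 \<Longrightarrow> cmod (of_real (k^2) / cnj w) = k^2 / cmod w"
  by (simp add: norm_divide norm_power)

lemma circle_inversion_in_cball:
  assumes "k > 0" and "k \<le> cmod w"
  shows "cmod (of_real (k^2) / cnj w) \<le> k"
proof -
  have "k * k \<le> k * cmod w" using assms by (intro mult_left_mono) auto
  then have "k^2 / cmod w \<le> k" using assms by (simp add: divide_le_eq power2_eq_square mult.commute)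
  then show ?thesis using circle_inversion_norm[OF assms(1)] by simp
qed

lemma poly_reflect_circle:
  assumes "degree g \<le> n" and "w \<noteq> 0" and "k > 0"
  shows "poly (reflect_circle k n g) w = (w / of_real k) ^ n * cnj (poly g (of_real (k^2) / cnj w))"
proof -
  have w: "w / of_real (k^2) \<noteq> 0" using assms by simp
  have "poly (reflect_circle k n g) w = of_real (k ^ n) * poly (reflect_conj n g) (w / of_real (k^2))"
    by (simp add: reflect_circle_def poly_pcompose field_simps)
  also have "\<dots> = of_real (k ^ n) * ((w / of_real (k^2)) ^ n * cnj (poly g (1 / cnj (w / of_real (k^2)))))"
    by (simp only: poly_reflect_conj[OF assms(1) w])
  also have "\<dots> = (w / of_real k) ^ n * cnj (poly g (of_real (k^2) / cnj w))"
    using assms by (simp add: field_simps power2_eq_square power_mult_distrib)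
  finally show ?thesis .
qed

lemma norm_poly_reflect_circle:
  assumes "degree g \<le> n" and "w \<noteq> 0" and "k > 0"
  shows "cmod (poly (reflect_circle k n g) w) = (cmod w / k) ^ n * cmod (poly g (of_real (k^2) / cnj w))"
  using assms by (simp add: poly_reflect_circle norm_mult norm_power norm_divide)

lemma norm_poly_le_outside_cball:
  assumes "k > 0" and "degree g \<le> n"
    and bound: "\<And>u. cmod u \<le> k \<Longrightarrow> cmod (poly (reflect_circle k n g) u) \<le> M"
    and w: "k \<le> cmod w"
  shows "cmod (poly g w) \<le> (cmod w / k) ^ n * M"
proof -
  have "w \<noteq> 0" using assms by auto
  then have "cmod (poly g w) = (cmod w / k) ^ n * cmod (poly (reflect_circle k n g) (of_real (k^2) / cnj w))"
    using norm_poly_reflect_circle[OF degree_reflect_circle \<open>w \<noteq> 0\<close> \<open>k > 0\<close>, of n k g]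
    by (simp add: reflect_circle_reflect_circle[OF assms(1,2)])
  also have "\<dots> \<le> (cmod w / k) ^ n * M"
    using assms circle_inversion_in_cball by (intro mult_left_mono bound) auto
  finally show ?thesis .
qed

section \<open>Products over the zeros of a polynomial\<close>

lemma prod_mset_nonneg:
  fixes f :: "'a \<Rightarrow> 'b::linordered_semidom"
  shows "(\<And>a. a \<in># A \<Longrightarrow> 0 \<le> f a) \<Longrightarrow> 0 \<le> (\<Prod>a\<in>#A. f a)"
  by (induction A) auto

lemma prod_mset_pos:
  fixes f :: "'a \<Rightarrow> 'b::linordered_semidom"
  shows "(\<And>a. a \<in># A \<Longrightarrow> 0 < f a) \<Longrightarrow> 0 < (\<Prod>a\<in>#A. f a)"
  by (induction A) auto

lemma norm_prod_mset:
  fixes f :: "'a \<Rightarrow> 'b::{real_normed_div_algebra, comm_ring_1}"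
  shows "norm (\<Prod>a\<in>#A. f a) = (\<Prod>a\<in>#A. norm (f a))"
  by (induction A) (auto simp: norm_mult)

lemma prod_mset_mono:
  fixes f g :: "'a \<Rightarrow> 'b::linordered_semidom"
  assumes "\<And>a. a \<in># A \<Longrightarrow> 0 \<le> f a \<and> f a \<le> g a"
  shows "(\<Prod>a\<in>#A. f a) \<le> (\<Prod>a\<in>#A. g a)"
  using assms
proof (induction A)
  case (add x A)
  have "f x * (\<Prod>a\<in>#A. f a) \<le> g x * (\<Prod>a\<in>#A. g a)"
    using add by (intro mult_mono prod_mset_nonneg) (auto intro: order.trans)
  then show ?case by simp
qed simp

lemma prod_mset_strict_mono:
  fixes f g :: "'a \<Rightarrow> 'b::linordered_semidom"
  assumes "A \<noteq> {#}" and "\<And>a. a \<in># A \<Longrightarrow> 0 < f a \<and> f a < g a"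
  shows "(\<Prod>a\<in>#A. f a) < (\<Prod>a\<in>#A. g a)"
  using assms
proof (induction A)
  case (add x A)
  show ?case
  proof (cases "A = {#}")
    case False
    have "f x < g x" "0 < g x" using add.prems(2)[of x] by auto
    moreover have "0 < (\<Prod>a\<in>#A. f a)" using add.prems(2) by (intro prod_mset_pos) auto
    ultimately have "f x * (\<Prod>a\<in>#A. f a) < g x * (\<Prod>a\<in>#A. g a)"
      using add False by (intro mult_strict_mono) auto
    then show ?thesis by simp
  qed (use add in simp)
qed simp

lemma poly_eq_lead_coeff_prod_proots:
  fixes p :: "complex poly"
  assumes "p \<noteq> 0"
  shows "poly p x = lead_coeff p * (\<Prod>a\<in>#proots p. (x - a))"
proof -
  have "poly p x = poly (smult (lead_coeff p) (\<Prod>a\<in>#proots p. [:-a, 1:])) x"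
    by (simp only: complex_poly_decompose_multiset)
  then show ?thesis by (simp add: poly_prod_mset)
qed

lemma norm_blaschke_factor_le:
  fixes w a :: complex
  assumes "k > 0" and "k \<le> cmod w" and "k \<le> cmod a"
  shows "k * cmod (w - a) \<le> cmod (of_real (k^2) - a * cnj w)"
proof (rule power2_le_imp_le)
  have "k^2 \<le> (cmod w)^2" and "k^2 \<le> (cmod a)^2" using assms by (auto intro: power_mono)
  moreover have "(cmod (of_real (k^2) - a * cnj w))^2 - (k * cmod (w - a))^2
      = ((cmod a)^2 - k^2) * ((cmod w)^2 - k^2)"
    by (simp only: power_mult_distrib cmod_power2) (simp add: power2_eq_square algebra_simps)
  ultimately show "(k * cmod (w - a))^2 \<le> (cmod (of_real (k^2) - a * cnj w))^2"
    by (smt (verit) mult_nonneg_nonneg)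
qed simp

text \<open>Each linear factor w - a is compared with its Blaschke counterpart k^2 - a conj w.\<close>
lemma norm_poly_le_reflect_circle:
  fixes g :: "complex poly"
  assumes k: "k > 0" and deg: "degree g \<le> n" and nz: "\<And>u. cmod u \<le> k \<Longrightarrow> poly g u \<noteq> 0"
    and w: "k \<le> cmod w"
  shows "cmod (poly g w) \<le> cmod (poly (reflect_circle k n g) w)"
proof -
  have g0: "g \<noteq> 0" using nz[of 0] k by auto
  define A where "A = proots g"
  define v where "v = of_real (k^2) / cnj w"
  have w0: "w \<noteq> 0" using w k by auto
  have roots: "k < cmod a" if "a \<in># A" for a
    using nz[of a] that g0 unfolding A_def by force
  have size: "size A \<le> n" using deg by (simp add: A_def size_proots_complex)
  have factor: "cmod (w - a) \<le> (cmod w / k) * cmod (v - a)" if "a \<in># A" for a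
  proof -
    have "k * cmod (w - a) \<le> cmod (of_real (k^2) - a * cnj w)"
      using norm_blaschke_factor_le[OF k w, of a] roots[OF that] by simp
    also have "of_real (k^2) - a * cnj w = cnj w * (v - a)" using w0 by (simp add: v_def field_simps)
    also have "cmod \<dots> = cmod w * cmod (v - a)" by (simp add: norm_mult)
    finally show ?thesis using k by (simp add: norm_mult field_simps)
  qed
  have "(\<Prod>a\<in>#A. cmod (w - a)) \<le> (\<Prod>a\<in>#A. (cmod w / k) * cmod (v - a))"
    by (rule prod_mset_mono) (use factor in auto)
  also have "\<dots> = (cmod w / k) ^ size A * (\<Prod>a\<in>#A. cmod (v - a))"
    by (simp only: prod_mset.distrib prod_mset_constant)
  also have "\<dots> \<le> (cmod w / k) ^ n * (\<Prod>a\<in>#A. cmod (v - a))"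
    using w k size by (intro mult_right_mono power_increasing prod_mset_nonneg) auto
  finally have "cmod (poly g w) \<le> (cmod w / k) ^ n * cmod (poly g v)"
    unfolding A_def poly_eq_lead_coeff_prod_proots[OF g0]
    by (simp add: norm_mult norm_prod_mset mult_left_mono mult.left_commute)
  then show ?thesis using norm_poly_reflect_circle[OF deg w0 k] by (simp add: v_def)
qed

lemma norm_coeff_le_reflect_circle:
  fixes g :: "complex poly"
  assumes k: "k > 0" and deg: "degree g \<le> n" and nz: "\<And>u. cmod u \<le> k \<Longrightarrow> poly g u \<noteq> 0"
  shows "cmod (coeff g n) \<le> cmod (coeff (reflect_circle k n g) n)"
proof (cases "degree g = n")
  case True
  have g0: "g \<noteq> 0" using nz[of 0] k by auto
  define A where "A = proots g"
  have "(\<Prod>a\<in>#A. k) \<le> (\<Prod>a\<in>#A. cmod (0 - a))"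
    using nz g0 k by (intro prod_mset_mono) (force simp: A_def)
  then have "k ^ n \<le> (\<Prod>a\<in>#A. cmod (0 - a))" using True by (simp add: A_def size_proots_complex)
  then have "cmod (lead_coeff g) * k ^ n \<le> cmod (lead_coeff g) * (\<Prod>a\<in>#A. cmod (0 - a))"
    by (rule mult_left_mono) simp
  then have "cmod (coeff g n) * k ^ n \<le> cmod (poly g 0)"
    using True unfolding A_def poly_eq_lead_coeff_prod_proots[OF g0] by (simp add: norm_mult norm_prod_mset)
  then show ?thesis using k by (simp add: coeff_reflect_circle_top norm_divide norm_power field_simps)
next
  case False
  then have "coeff g n = 0" using deg by (intro coeff_eq_0) auto
  then show ?thesis by simp
qed

lemma reflect_circle_of_zero_free:
  fixes g :: "complex poly"
  assumes k: "k > 0" and deg: "degree g \<le> n" and nz: "\<And>u. cmod u \<le> k \<Longrightarrow> poly g u \<noteq> 0"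
  shows "degree (reflect_circle k n g) = n"
    and "\<And>w. poly (reflect_circle k n g) w = 0 \<Longrightarrow> cmod w < k"
proof -
  have "coeff (reflect_circle k n g) n \<noteq> 0"
    using nz[of 0] k by (simp add: coeff_reflect_circle_top)
  then show "degree (reflect_circle k n g) = n"
    by (intro antisym degree_reflect_circle le_degree)
  fix w assume root: "poly (reflect_circle k n g) w = 0"
  show "cmod w < k"
  proof (rule ccontr)
    assume "\<not> cmod w < k"
    then have w: "k \<le> cmod w" by simp
    then have "w \<noteq> 0" using k by auto
    then have "poly g (of_real (k^2) / cnj w) = 0" using root poly_reflect_circle[OF deg _ k] k by simp
    then show False using nz circle_inversion_in_cball[OF k w] by blast
  qed
qed

section \<open>Dilation combinations\<close>

lemma norm_Phi_le:
  assumes "0 < k" "r < R" "k \<le> r" and "cmod \<alpha> \<le> 1" and "cmod \<beta> \<le> 1"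
  shows "cmod (Phi n k R r \<alpha> \<beta>) \<le> ((R + k) / (r + k)) ^ n"
proof -
  define q where "q = ((R + k) / (r + k)) ^ n"
  have "1 \<le> (R + k) / (r + k)" using assms by (simp add: field_simps)
  then have q: "1 \<le> q" unfolding q_def by (rule one_le_power)
  have "cmod (Phi n k R r \<alpha> \<beta>) \<le> cmod (\<beta> * of_real (q - cmod \<alpha>)) + cmod \<alpha>"
    unfolding Phi_def q_def add.commute[of k r] by (rule norm_triangle_ineq4)
  also have "cmod (\<beta> * of_real (q - cmod \<alpha>)) = cmod \<beta> * (q - cmod \<alpha>)"
    using q assms by (simp only: norm_mult norm_of_real abs_of_nonneg diff_ge_0_iff_ge order.trans)
  also have "\<dots> \<le> q - cmod \<alpha>"
    using q assms by (intro mult_left_le_one_le) auto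
  finally show ?thesis by (simp add: q_def)
qed

definition dilation_comb :: "real \<Rightarrow> real \<Rightarrow> complex \<Rightarrow> complex poly \<Rightarrow> complex poly" where
  "dilation_comb R r \<Phi> F = F \<circ>\<^sub>p [:0, of_real R:] + smult \<Phi> (F \<circ>\<^sub>p [:0, of_real r:])"

lemma poly_dilation_comb:
  "poly (dilation_comb R r \<Phi> F) w = poly F (of_real R * w) + \<Phi> * poly F (of_real r * w)"
  by (simp add: dilation_comb_def poly_pcompose mult_ac)

lemma coeff_dilation_comb:
  "coeff (dilation_comb R r \<Phi> F) i = (of_real R ^ i + \<Phi> * of_real r ^ i) * coeff F i"
  by (simp add: dilation_comb_def coeff_pcompose_linear algebra_simps)

lemma dilation_comb_diff:
  "dilation_comb R r \<Phi> (f - g) = dilation_comb R r \<Phi> f - dilation_comb R r \<Phi> g"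
  by (rule poly_eqI) (simp add: coeff_dilation_comb algebra_simps)

lemma dilation_comb_smult:
  "dilation_comb R r \<Phi> (smult c f) = smult c (dilation_comb R r \<Phi> f)"
  by (rule poly_eqI) (simp add: coeff_dilation_comb algebra_simps)

lemma dilation_comb_const: "dilation_comb R r \<Phi> [:c:] = [:(1 + \<Phi>) * c:]"
  by (simp add: dilation_comb_def algebra_simps)

lemma dilation_comb_monom:
  "dilation_comb R r \<Phi> (monom 1 n) = smult (of_real (R ^ n) + of_real (r ^ n) * \<Phi>) (monom 1 n)"
  by (rule poly_eqI) (simp add: coeff_dilation_comb coeff_monom mult_ac)

lemma degree_dilation_comb:
  assumes "degree F = n" and "n \<ge> 1" and "0 < k" "r < R" "k \<le> r"
    and \<Phi>: "cmod \<Phi> \<le> ((R + k) / (r + k)) ^ n"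
  shows "degree (dilation_comb R r \<Phi> F) = n"
proof -
  define q where "q = (R + k) / (r + k)"
  have "q * r < R" using assms by (simp add: q_def field_simps)
  then have "(q * r) ^ n < R ^ n" using assms by (intro power_strict_mono) (auto simp: q_def)
  moreover have "cmod \<Phi> * r ^ n \<le> q ^ n * r ^ n" using \<Phi> assms by (intro mult_right_mono) (auto simp: q_def)
  ultimately have "cmod \<Phi> * r ^ n < R ^ n" by (simp add: power_mult_distrib)
  then have "cmod (\<Phi> * of_real r ^ n) < cmod (of_real R ^ n :: complex)"
    using assms by (simp add: norm_mult norm_power)
  then have "of_real R ^ n + \<Phi> * of_real r ^ n \<noteq> 0"
    by (metis add_eq_0_iff norm_minus_cancel order_less_irrefl)
  moreover have "coeff F n \<noteq> 0" using assms by (metis leading_coeff_0_iff degree_0 not_one_le_zero)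
  ultimately have "coeff (dilation_comb R r \<Phi> F) n \<noteq> 0" by (simp add: coeff_dilation_comb)
  moreover have "degree (dilation_comb R r \<Phi> F) \<le> n"
    using assms by (intro degree_le) (simp add: coeff_dilation_comb coeff_eq_0)
  ultimately show ?thesis by (intro antisym le_degree)
qed

text \<open>Squaring out the claim of norm_dilation_factor_less gives this inequality in
  \<rho> = |w|, s = |a| and x = Re(w conj a) \<ge> -\<rho> s.\<close>
lemma dilation_factor_ineq:
  fixes R r k \<rho> s x :: real
  assumes "r < R" "k \<le> r" "0 < k" "0 \<le> s" "s < k" "1 \<le> \<rho>" "- \<rho> * s \<le> x"
  shows "(r + k)^2 * (R^2 * \<rho>^2 - 2 * R * x + s^2) - (R + k)^2 * (r^2 * \<rho>^2 - 2 * r * x + s^2) > 0"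
proof -
  define C1 where "C1 = 2 * R * r + k * R + k * r"
  define C2 where "C2 = R * r - k^2"
  define C3 where "C3 = R + r + 2 * k"
  have C2: "0 < C2"
  proof -
    have "k * k \<le> r * k" using assms by (intro mult_right_mono) auto
    moreover have "r * k < r * R" using assms by (intro mult_strict_left_mono) auto
    ultimately show ?thesis unfolding C2_def by (simp add: power2_eq_square mult.commute)
  qed
  have "0 < R * r" "0 < k * R" "0 < k * r" "0 < k * k" using assms by auto
  then have C12: "C2 < C1" by (simp add: C1_def C2_def power2_eq_square)
  have C3: "0 < C3" using assms by (simp add: C3_def)
  have expand: "(r + k)^2 * (R^2 * \<rho>^2 - 2 * R * x + s^2) - (R + k)^2 * (r^2 * \<rho>^2 - 2 * r * x + s^2)
      = (R - r) * (\<rho>^2 * k * C1 + 2 * x * C2 - s^2 * C3)"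
    by (simp add: C1_def C2_def C3_def power2_eq_square algebra_simps)
  have "0 \<le> (\<rho> - 1) * ((\<rho> + 1) * C1 - 2 * C2)"
    using assms C2 C12 by (intro mult_nonneg_nonneg) (auto intro: order.trans[of _ "2 * C1"] mult_right_mono)
  also have "(\<rho> - 1) * ((\<rho> + 1) * C1 - 2 * C2) = \<rho>^2 * C1 - 2 * \<rho> * C2 - k * C3"
    by (simp add: C1_def C2_def C3_def power2_eq_square algebra_simps)
  finally have h0: "0 \<le> k * (\<rho>^2 * C1 - 2 * \<rho> * C2 - k * C3)"
    using assms by simp
  have "(- \<rho> * s) * C2 \<le> x * C2" using assms C2 by (intro mult_right_mono) auto
  moreover have "\<rho> * s * C2 < \<rho> * k * C2" using assms C2 by simp
  moreover have "s^2 * C3 \<le> k^2 * C3" using assms C3 by (intro mult_right_mono power_mono) auto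
  ultimately have "0 < \<rho>^2 * k * C1 + 2 * x * C2 - s^2 * C3"
    using h0 by (simp add: power2_eq_square algebra_simps)
  then show ?thesis unfolding expand using assms by simp
qed

lemma norm_dilation_factor_less:
  fixes w a :: complex
  assumes "r < R" "k \<le> r" "0 < k" and "cmod a < k" and "1 \<le> cmod w"
  shows "(R + k) / (r + k) * cmod (of_real r * w - a) < cmod (of_real R * w - a)"
proof -
  define x where "x = Re w * Re a + Im w * Im a"
  have "x^2 \<le> (cmod w * cmod a)^2"
  proof -
    have "(cmod w * cmod a)^2 - x^2 = (Re w * Im a - Im w * Re a)^2"
      unfolding x_def power_mult_distrib cmod_power2 by (simp add: power2_eq_square algebra_simps)
    then show ?thesis by (smt (verit) zero_le_power2)
  qed
  then have "\<bar>x\<bar> \<le> cmod w * cmod a" by (intro power2_le_imp_le[of "\<bar>x\<bar>"]) auto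
  then have x: "- cmod w * cmod a \<le> x" by linarith
  have sq: "(cmod (of_real c * w - a))^2 = c^2 * (cmod w)^2 - 2 * c * x + (cmod a)^2" for c
    unfolding x_def cmod_power2 by (simp add: power2_eq_square algebra_simps)
  have "0 < (r + k)^2 * (R^2 * (cmod w)^2 - 2 * R * x + (cmod a)^2)
          - (R + k)^2 * (r^2 * (cmod w)^2 - 2 * r * x + (cmod a)^2)"
    by (rule dilation_factor_ineq) (use assms x in auto)
  then have "((R + k) * cmod (of_real r * w - a))^2 < ((r + k) * cmod (of_real R * w - a))^2"
    unfolding power_mult_distrib sq by simp
  then have "(R + k) * cmod (of_real r * w - a) < (r + k) * cmod (of_real R * w - a)"
    by (rule power2_less_imp_less) (use assms in simp)
  then show ?thesis using assms by (simp add: field_simps)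
qed

text \<open>Compare |F(Rw)| with |F(rw)| factor by factor over the zeros of F.\<close>
lemma dilation_comb_roots_in_unit_disc:
  assumes F: "degree F = n" "n \<ge> 1" and roots: "\<And>w. poly F w = 0 \<Longrightarrow> cmod w < k"
    and "0 < k" "r < R" "k \<le> r" and \<Phi>: "cmod \<Phi> \<le> ((R + k) / (r + k)) ^ n"
    and root: "poly (dilation_comb R r \<Phi> F) w = 0"
  shows "cmod w < 1"
proof (rule ccontr)
  assume "\<not> cmod w < 1"
  then have w: "1 \<le> cmod w" by simp
  define q where "q = (R + k) / (r + k)"
  define A where "A = proots F"
  have F0: "F \<noteq> 0" using F by auto
  have roots_A: "cmod a < k" if "a \<in># A" for a using roots that F0 unfolding A_def by simp
  have size: "size A = n" unfolding A_def using F by (simp add: size_proots_complex)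
  have "(\<Prod>a\<in>#A. q * cmod (of_real r * w - a)) < (\<Prod>a\<in>#A. cmod (of_real R * w - a))"
  proof (rule prod_mset_strict_mono)
    show "A \<noteq> {#}" using size F by auto
    fix a assume a: "a \<in># A"
    have "r \<le> cmod (of_real r * w)" using w assms by (simp add: norm_mult)
    then have "0 < cmod (of_real r * w - a)"
      using roots_A[OF a] norm_triangle_ineq2[of "of_real r * w" a] assms by linarith
    moreover have "0 < q" using assms by (simp add: q_def)
    moreover have "q * cmod (of_real r * w - a) < cmod (of_real R * w - a)"
      unfolding q_def by (rule norm_dilation_factor_less[OF assms(5,6,4) roots_A[OF a] w])
    ultimately show "0 < q * cmod (of_real r * w - a) \<and> q * cmod (of_real r * w - a) < cmod (of_real R * w - a)"
      by simp
  qed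
  then have "q ^ n * cmod (poly F (of_real r * w)) < cmod (poly F (of_real R * w))"
    unfolding poly_eq_lead_coeff_prod_proots[OF F0] A_def[symmetric]
    using F0 by (simp add: norm_mult norm_prod_mset prod_mset.distrib size mult.left_commute)
  moreover have "cmod (\<Phi> * poly F (of_real r * w)) \<le> q ^ n * cmod (poly F (of_real r * w))"
    unfolding norm_mult q_def using \<Phi> by (intro mult_right_mono) auto
  moreover have "poly F (of_real R * w) = - (\<Phi> * poly F (of_real r * w))"
    using root by (simp add: poly_dilation_comb eq_neg_iff_add_eq_0)
  ultimately show False by simp
qed

section \<open>Laguerre's theorem for polar derivatives\<close>

lemma sum_mset_strict_mono:
  fixes f g :: "'a \<Rightarrow> 'b::ordered_cancel_comm_monoid_add"
  assumes "A \<noteq> {#}" and "\<And>a. a \<in># A \<Longrightarrow> f a < g a"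
  shows "(\<Sum>a\<in>#A. f a) < (\<Sum>a\<in>#A. g a)"
  using assms
proof (induction A)
  case (add x A)
  then show ?case
    by (cases "A = {#}") (auto intro: add_strict_mono)
qed simp

lemma norm_sum_mset_le:
  fixes f :: "'a \<Rightarrow> 'b::real_normed_vector"
  shows "norm (\<Sum>a\<in>#A. f a) \<le> (\<Sum>a\<in>#A. norm (f a))"
proof (induction A)
  case (add x A)
  then show ?case using norm_triangle_ineq[of "f x" "\<Sum>a\<in>#A. f a"] by simp
qed simp

lemma sum_mset_squared_le:
  fixes g :: "'a \<Rightarrow> real"
  shows "(\<Sum>a\<in>#A. g a)^2 \<le> real (size A) * (\<Sum>a\<in>#A. (g a)^2)"
proof (induction A)
  case (add x A)
  have "(\<Sum>a\<in>#A. 2 * g x * g a) \<le> (\<Sum>a\<in>#A. (g x)^2 + (g a)^2)"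
    by (rule sum_mset_mono) (rule sum_squares_bound)
  then have "2 * g x * (\<Sum>a\<in>#A. g a) \<le> real (size A) * (g x)^2 + (\<Sum>a\<in>#A. (g a)^2)"
    by (simp add: sum_mset.distrib sum_mset_distrib_left mult.assoc)
  then show ?case using add by (simp add: power2_eq_square algebra_simps)
qed simp

lemma norm_sum_mset_squared_le:
  fixes f :: "'a \<Rightarrow> complex"
  shows "(cmod (\<Sum>a\<in>#A. f a))^2 \<le> real (size A) * (\<Sum>a\<in>#A. (cmod (f a))^2)"
proof -
  have "(cmod (\<Sum>a\<in>#A. f a))^2 \<le> (\<Sum>a\<in>#A. cmod (f a))^2"
    by (rule power_mono[OF norm_sum_mset_le]) simp
  also have "\<dots> \<le> real (size A) * (\<Sum>a\<in>#A. (cmod (f a))^2)" by (rule sum_mset_squared_le)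
  finally show ?thesis .
qed

lemma poly_pderiv_prod_linear_factors:
  fixes A :: "complex multiset"
  assumes "x \<notin># A"
  shows "poly (pderiv (\<Prod>a\<in>#A. [:-a, 1:])) x = poly (\<Prod>a\<in>#A. [:-a, 1:]) x * (\<Sum>a\<in>#A. 1 / (x - a))"
  using assms
proof (induction A)
  case (add b A)
  define P where "P = (\<Prod>a\<in>#A. [:-a, 1:])"
  have "x - b \<noteq> 0" using add.prems by auto
  have IH: "poly (pderiv P) x = poly P x * (\<Sum>a\<in>#A. 1 / (x - a))" using add by (simp add: P_def)
  have prod: "(\<Prod>a\<in>#add_mset b A. [:-a, 1:]) = [:-b, 1:] * P" by (simp add: P_def)
  have deriv: "poly (pderiv ([:-b, 1:] * P)) x = (x - b) * poly (pderiv P) x + poly P x"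
    by (simp add: pderiv_pCons pderiv_diff pderiv_smult algebra_simps)
  have "poly ([:-b, 1:] * P) x = (x - b) * poly P x" by (simp only: poly_mult) simp
  then show ?case unfolding prod deriv sum_mset.add_mset IH
    using \<open>x - b \<noteq> 0\<close> by (simp add: field_simps)
qed simp

lemma coeffs_prod_linear_factors:
  fixes A :: "'a::comm_ring_1 multiset"
  shows "degree (\<Prod>a\<in>#A. [:-a, 1:]) \<le> size A \<and> coeff (\<Prod>a\<in>#A. [:-a, 1:]) (size A) = 1 \<and>
         (size A \<ge> 1 \<longrightarrow> coeff (\<Prod>a\<in>#A. [:-a, 1:]) (size A - 1) = - (\<Sum>a\<in>#A. a))"
proof (induction A)
  case (add b A)
  define P where "P = (\<Prod>a\<in>#A. [:-a, 1:])"
  have eq: "(\<Prod>a\<in>#add_mset b A. [:-a, 1:]) = smult (-b) P + pCons 0 P"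
    by (simp add: P_def mult_pCons_left)
  have P: "degree P \<le> size A" "coeff P (size A) = 1"
    "size A \<ge> 1 \<Longrightarrow> coeff P (size A - 1) = - (\<Sum>a\<in>#A. a)"
    using add by (auto simp: P_def)
  have "coeff P (Suc (size A)) = 0" using P by (intro coeff_eq_0) auto
  moreover have "degree (smult (-b) P + pCons 0 P) \<le> Suc (size A)"
    using P by (intro degree_add_le) (auto intro: order.trans[OF degree_smult_le] simp: degree_pCons_le)
  moreover have "coeff (smult (-b) P + pCons 0 P) (size A) = - b - (\<Sum>a\<in>#A. a)"
    using P by (cases "size A") (auto simp: P_def)
  ultimately show ?case unfolding eq using P by (simp add: algebra_simps)
qed simp

text \<open>polar m \<zeta> \<tau> H is \<tau> times the polar derivative of H (of degree m) with
  respect to the point \<zeta>/\<tau>; for \<tau> = 0 it is \<zeta> H'.\<close>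
definition polar :: "nat \<Rightarrow> complex \<Rightarrow> complex \<Rightarrow> complex poly \<Rightarrow> complex poly" where
  "polar m \<zeta> \<tau> H = smult (\<tau> * of_nat m) H + [:\<zeta>, -\<tau>:] * pderiv H"

lemma poly_polar: "poly (polar m \<zeta> \<tau> H) x = \<tau> * of_nat m * poly H x + (\<zeta> - \<tau> * x) * poly (pderiv H) x"
  by (simp add: polar_def algebra_simps)

lemma coeff_polar:
  "coeff (polar m \<zeta> \<tau> H) j = \<tau> * (of_nat m - of_nat j) * coeff H j + \<zeta> * of_nat (Suc j) * coeff H (Suc j)"
proof -
  have "[:\<zeta>, -\<tau>:] * pderiv H = smult \<zeta> (pderiv H) + pCons 0 (smult (-\<tau>) (pderiv H))"
    by (simp add: mult_pCons_left)
  then show ?thesis unfolding polar_def by (cases j) (simp_all add: coeff_pderiv algebra_simps)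
qed

lemma poly_pderiv_polar:
  "poly (pderiv (polar m \<zeta> \<tau> H)) x
     = \<tau> * (of_nat m - 1) * poly (pderiv H) x + (\<zeta> - \<tau> * x) * poly (pderiv (pderiv H)) x"
  by (simp add: polar_def pderiv_add pderiv_smult pderiv_mult pderiv_pCons pderiv_minus algebra_simps)

text \<open>The heart of Laguerre's theorem: sum the inequalities |x y - 1| < |y| over
  y = 1/(x - a) and apply Cauchy-Schwarz to \<Sum> y.\<close>
lemma norm_logderiv_shift_less:
  fixes A :: "complex multiset"
  assumes A: "A \<noteq> {#}" and roots: "\<And>a. a \<in># A \<Longrightarrow> cmod a < 1" and x: "1 \<le> cmod x"
  defines "S \<equiv> \<Sum>a\<in>#A. 1 / (x - a)"
  shows "cmod (x * S - of_nat (size A)) < cmod S"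
proof -
  define m where "m = size A"
  define y where "y a = 1 / (x - a)" for a
  define \<phi> where "\<phi> u = ((cmod x)^2 - 1) * (cmod u)^2 - 2 * Re (x * u) + 1" for u
  have \<phi>_eq: "\<phi> u = (cmod (x * u - 1))^2 - (cmod u)^2" for u
    unfolding \<phi>_def cmod_power2 by (simp add: power2_eq_square algebra_simps)
  have \<phi>_neg: "\<phi> (y a) < 0" if a: "a \<in># A" for a
  proof -
    have xa: "x - a \<noteq> 0" using roots[OF a] x by auto
    then have "x * y a - 1 = a * y a" and "y a \<noteq> 0" by (simp_all add: y_def field_simps)
    then have "cmod (x * y a - 1) < cmod (y a)" using roots[OF a] by (simp add: norm_mult)
    then have "(cmod (x * y a - 1))^2 < (cmod (y a))^2" by (intro power_strict_mono) auto
    then show ?thesis unfolding \<phi>_eq by simp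
  qed
  have sum_\<phi>: "(\<Sum>a\<in>#B. \<phi> (y a))
      = ((cmod x)^2 - 1) * (\<Sum>a\<in>#B. (cmod (y a))^2) - 2 * Re (x * (\<Sum>a\<in>#B. y a)) + real (size B)" for B
    by (induction B) (simp_all add: \<phi>_def algebra_simps)
  have S: "S = (\<Sum>a\<in>#A. y a)" unfolding S_def y_def ..
  have "(cmod (x * S - of_nat m))^2 - (cmod S)^2
      = ((cmod x)^2 - 1) * (cmod S)^2 - 2 * real m * Re (x * S) + (real m)^2"
    unfolding cmod_power2 by (simp add: power2_eq_square algebra_simps)
  also have "\<dots> \<le> ((cmod x)^2 - 1) * (real m * (\<Sum>a\<in>#A. (cmod (y a))^2)) - 2 * real m * Re (x * S) + (real m)^2"
    using norm_sum_mset_squared_le[of y A] one_le_power[OF x, of 2]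
    by (simp add: S m_def mult_left_mono)
  also have "\<dots> = real m * (\<Sum>a\<in>#A. \<phi> (y a))"
    by (simp add: sum_\<phi> S m_def algebra_simps power2_eq_square)
  also have "\<dots> < 0"
  proof -
    have "(\<Sum>a\<in>#A. \<phi> (y a)) < (\<Sum>a\<in>#A. 0)" by (rule sum_mset_strict_mono[OF A \<phi>_neg])
    moreover have "0 < real m" using A by (simp add: m_def nonempty_has_size)
    ultimately show ?thesis by (simp add: mult_pos_neg)
  qed
  finally have "(cmod (x * S - of_nat m))^2 < (cmod S)^2" by linarith
  then show ?thesis unfolding m_def by (rule power2_less_imp_less) simp
qed

lemma polar_nonzero_outside_unit_disc:
  fixes H :: "complex poly"
  assumes deg: "degree H = m" and m: "m \<ge> 1" and roots: "\<And>x. poly H x = 0 \<Longrightarrow> cmod x < 1"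
    and \<zeta>: "\<zeta> \<noteq> 0" "cmod \<tau> \<le> cmod \<zeta>" and x: "1 \<le> cmod x"
  shows "poly (polar m \<zeta> \<tau> H) x \<noteq> 0"
proof
  assume root: "poly (polar m \<zeta> \<tau> H) x = 0"
  have H0: "H \<noteq> 0" using deg m by auto
  define A where "A = proots H"
  define P where "P = (\<Prod>a\<in>#A. [:-a, 1:])"
  define S where "S = (\<Sum>a\<in>#A. 1 / (x - a))"
  have roots_A: "cmod a < 1" if "a \<in># A" for a using roots that H0 unfolding A_def by simp
  have size: "size A = m" unfolding A_def using deg by (simp add: size_proots_complex)
  have "x \<notin># A" using roots_A x by force
  then have "poly P x \<noteq> 0" and P': "poly (pderiv P) x = poly P x * S"
    unfolding P_def S_def by (auto simp: poly_prod_mset prod_mset_zero_iff poly_pderiv_prod_linear_factors)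
  define c where "c = lead_coeff H"
  have "H = smult c P"
    unfolding c_def P_def A_def by (rule complex_poly_decompose_multiset[symmetric])
  then have "poly (polar m \<zeta> \<tau> H) x = c * poly P x * (\<tau> * of_nat m + (\<zeta> - \<tau> * x) * S)"
    by (simp add: poly_polar pderiv_smult P' algebra_simps)
  then have "\<tau> * of_nat m + (\<zeta> - \<tau> * x) * S = 0"
    using root H0 \<open>poly P x \<noteq> 0\<close> by (simp add: c_def)
  then have eqn: "(\<tau> * x - \<zeta>) * S = \<tau> * of_nat m" by (simp add: algebra_simps)
  have "(\<tau> * x - \<zeta>) * (x * S - of_nat m) = x * ((\<tau> * x - \<zeta>) * S) - of_nat m * (\<tau> * x - \<zeta>)"
    by (simp add: algebra_simps)
  then have key: "(\<tau> * x - \<zeta>) * (x * S - of_nat m) = of_nat m * \<zeta>"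
    unfolding eqn by (simp add: algebra_simps)
  have less: "cmod (x * S - of_nat m) < cmod S"
    unfolding S_def size[symmetric] using size m by (intro norm_logderiv_shift_less) (auto simp: roots_A x)
  show False
  proof (cases "\<tau> * x = \<zeta>")
    case True then show False using key \<zeta> m by simp
  next
    case False
    have "real m * cmod \<zeta> = cmod (\<tau> * x - \<zeta>) * cmod (x * S - of_nat m)"
      using arg_cong[OF key, of cmod] by (simp add: norm_mult)
    also have "\<dots> < cmod (\<tau> * x - \<zeta>) * cmod S" using less False by simp
    also have "\<dots> = real m * cmod \<tau>" using arg_cong[OF eqn, of cmod] by (simp add: norm_mult)
    finally show False using \<zeta> m mult_left_mono[OF \<zeta>(2), of "real m"] by simp
  qed
qed

lemma degree_polar_le:
  assumes deg: "degree H \<le> m"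
  shows "degree (polar m \<zeta> \<tau> H) \<le> m - 1"
proof (rule degree_le, intro allI impI)
  fix j assume j: "m - 1 < j"
  have "coeff H (Suc j) = 0" using deg j by (intro coeff_eq_0) auto
  moreover have "(of_nat m - of_nat j) * coeff H j = (0::complex)"
  proof (cases "j = m")
    case False
    then have "coeff H j = 0" using deg j by (intro coeff_eq_0) auto
    then show ?thesis by simp
  qed simp
  ultimately show "coeff (polar m \<zeta> \<tau> H) j = 0" by (simp add: coeff_polar)
qed

lemma degree_polar:
  fixes H :: "complex poly"
  assumes deg: "degree H = m" and m: "m \<ge> 1" and roots: "\<And>x. poly H x = 0 \<Longrightarrow> cmod x < 1"
    and \<zeta>: "\<zeta> \<noteq> 0" "cmod \<tau> \<le> cmod \<zeta>"
  shows "degree (polar m \<zeta> \<tau> H) = m - 1"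
proof (rule antisym)
  show "degree (polar m \<zeta> \<tau> H) \<le> m - 1" using deg by (intro degree_polar_le) simp
  have H0: "H \<noteq> 0" using deg m by auto
  define A where "A = proots H"
  have roots_A: "cmod a < 1" if "a \<in># A" for a using roots that H0 unfolding A_def by simp
  have size: "size A = m" unfolding A_def using deg by (simp add: size_proots_complex)
  define c where "c = lead_coeff H"
  have "H = smult c (\<Prod>a\<in>#A. [:-a, 1:])"
    unfolding c_def A_def by (rule complex_poly_decompose_multiset[symmetric])
  then have coeffs: "coeff H j = c * coeff (\<Prod>a\<in>#A. [:-a, 1:]) j" for j
    by (metis coeff_smult)
  have "cmod (\<Sum>a\<in>#A. a) \<le> (\<Sum>a\<in>#A. cmod a)" using norm_sum_mset_le[of "\<lambda>a. a"] by simp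
  also have "\<dots> < (\<Sum>a\<in>#A. 1)" using size m roots_A by (intro sum_mset_strict_mono) auto
  finally have sum_less: "cmod (\<Sum>a\<in>#A. a) < real m" using size by simp
  have "of_nat m * \<zeta> - \<tau> * (\<Sum>a\<in>#A. a) \<noteq> 0"
  proof
    assume "of_nat m * \<zeta> - \<tau> * (\<Sum>a\<in>#A. a) = 0"
    then have "of_nat m * \<zeta> = \<tau> * (\<Sum>a\<in>#A. a)" by simp
    then have "real m * cmod \<zeta> = cmod \<tau> * cmod (\<Sum>a\<in>#A. a)"
      by (metis norm_mult norm_of_nat)
    also have "\<dots> \<le> cmod \<zeta> * cmod (\<Sum>a\<in>#A. a)" using \<zeta> by (simp add: mult_right_mono)
    also have "\<dots> < cmod \<zeta> * real m" using sum_less \<zeta> by simp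
    finally show False by simp
  qed
  moreover have "coeff (polar m \<zeta> \<tau> H) (m - 1) = c * (of_nat m * \<zeta> - \<tau> * (\<Sum>a\<in>#A. a))"
    using m coeffs_prod_linear_factors[of A]
    by (simp add: coeff_polar coeffs size of_nat_diff algebra_simps)
  ultimately have "coeff (polar m \<zeta> \<tau> H) (m - 1) \<noteq> 0" using H0 by (simp add: c_def)
  then show "m - 1 \<le> degree (polar m \<zeta> \<tau> H)" by (rule le_degree)
qed

section \<open>Zeros of the operator B\<close>

definition class_B :: "complex \<Rightarrow> complex \<Rightarrow> complex \<Rightarrow> nat \<Rightarrow> bool" where
  "class_B l0 l1 l2 n \<longleftrightarrow> (\<forall>w. Upoly l0 l1 l2 n w = 0 \<longrightarrow> cmod w \<le> cmod (w - of_nat n / 2))"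

lemma Bop_add: "Bop l0 l1 l2 n (p + q) z = Bop l0 l1 l2 n p z + Bop l0 l1 l2 n q z"
  by (simp add: Bop_def pderiv_add algebra_simps add_divide_distrib)

lemma Bop_smult: "Bop l0 l1 l2 n (smult c p) z = c * Bop l0 l1 l2 n p z"
  by (simp add: Bop_def pderiv_smult algebra_simps)

lemma Bop_diff: "Bop l0 l1 l2 n (p - q) z = Bop l0 l1 l2 n p z - Bop l0 l1 l2 n q z"
  by (simp add: Bop_def pderiv_diff algebra_simps diff_divide_distrib)

lemma Bop_const: "Bop l0 l1 l2 n [:c:] z = l0 * c"
  by (simp add: Bop_def)

lemma class_B_coeffs_nonzero:
  assumes "class_B l0 l1 l2 n" and "n \<ge> 1"
  shows "\<not> (l0 = 0 \<and> of_nat n * l1 = 0 \<and> of_nat (n * (n - 1)) / 2 * l2 = 0)"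
proof
  assume "l0 = 0 \<and> of_nat n * l1 = 0 \<and> of_nat (n * (n - 1)) / 2 * l2 = 0"
  then have l: "l0 = 0" "of_nat n * l1 = 0" "of_nat (n * (n - 1)) / 2 * l2 = 0" by auto
  have "Upoly l0 l1 l2 n (of_nat n) = 0" unfolding Upoly_def l by simp
  then have "cmod (of_nat n :: complex) \<le> cmod (of_nat n - of_nat n / 2 :: complex)"
    using assms(1) unfolding class_B_def by blast
  also have "(of_nat n - of_nat n / 2 :: complex) = of_real (real n / 2)" by simp
  finally show False using assms(2) by simp
qed

lemma linear_factor_in_halfplane:
  fixes a b h :: complex
  assumes root: "\<And>w. a + b * w = 0 \<Longrightarrow> cmod w \<le> cmod (w - h)"
  shows "cmod a \<le> cmod (a + h * b)"
proof (cases "b = 0")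
  case False
  have "cmod (- a / b) \<le> cmod (- a / b - h)" by (rule root) (use False in simp)
  then have "cmod b * cmod (- a / b) \<le> cmod b * cmod (- a / b - h)" by (rule mult_left_mono) simp
  also have "cmod b * cmod (- a / b - h) = cmod (b * (- a / b - h))" by (simp add: norm_mult)
  also have "b * (- a / b - h) = - (a + h * b)" using False by (simp add: field_simps)
  finally show ?thesis using False by (simp add: norm_divide norm_minus_commute[of "- a"] add.commute)
qed simp

lemma linear_factor_in_halfplane_nonzero:
  fixes a b h :: complex
  assumes "\<And>w. a + b * w = 0 \<Longrightarrow> cmod w \<le> cmod (w - h)" and "h \<noteq> 0" and "a \<noteq> 0 \<or> b \<noteq> 0"
  shows "a + h * b \<noteq> 0"
proof
  assume "a + h * b = 0"
  moreover have "cmod a \<le> cmod (a + h * b)" by (rule linear_factor_in_halfplane) (rule assms(1))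
  ultimately have "a = 0" by simp
  then show False using \<open>a + h * b = 0\<close> assms(2,3) by simp
qed

lemma quadratic_factorization:
  fixes A B C :: complex
  assumes "\<not> (C = 0 \<and> B = 0 \<and> A = 0)"
  obtains \<kappa> a1 b1 a2 b2 where "\<kappa> \<noteq> 0" "C = \<kappa> * a1 * a2" "B = \<kappa> * (a1 * b2 + a2 * b1)"
    "A = \<kappa> * b1 * b2" "a1 \<noteq> 0 \<or> b1 \<noteq> 0" "a2 \<noteq> 0 \<or> b2 \<noteq> 0"
proof (cases "A = 0")
  case False
  define s where "s = csqrt (B^2 - 4 * A * C)"
  have s2: "s^2 = B^2 - 4 * A * C" unfolding s_def by simp
  define w1 where "w1 = (- B + s) / (2 * A)"
  define w2 where "w2 = (- B - s) / (2 * A)"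
  have "C = A * (- w1) * (- w2)"
    unfolding w1_def w2_def using False s2 by (simp add: field_simps power2_eq_square) algebra
  moreover have "B = A * ((- w1) * 1 + (- w2) * 1)"
    unfolding w1_def w2_def using False by (simp add: field_simps)
  ultimately show ?thesis by (intro that[of A "- w1" "- w2" 1 1]) (use False in simp_all)
next
  case True
  show ?thesis
  proof (cases "B = 0")
    case False
    then show ?thesis using True that[of 1 1 C B 0] by auto
  next
    case B: True
    then have "C \<noteq> 0" using assms True by auto
    then show ?thesis using True B that[of 1 1 C 0 0] by auto
  qed
qed

text \<open>B inherits the factorisation of U: each linear factor of U contributes one polar
  derivative.\<close>
lemma Bop_eq_polar_polar:
  assumes n: "n \<ge> 2" and l0: "l0 = \<kappa> * a1 * a2" and l1: "of_nat n * l1 = \<kappa> * (a1 * b2 + a2 * b1)"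
    and l2: "of_nat (n * (n - 1)) / 2 * l2 = \<kappa> * b1 * b2"
  shows "Bop l0 l1 l2 n G z = \<kappa> / (of_nat n * (of_nat n - 1))
    * poly (polar (n - 1) (z * (a2 + of_nat n / 2 * b2)) a2 (polar n (z * (a1 + of_nat n / 2 * b1)) a1 G)) z"
proof -
  define N where "N = (of_nat n :: complex)"
  have N0: "N \<noteq> 0" and N1: "N - 1 \<noteq> 0" using n by (auto simp: N_def)
  have n1: "(of_nat (n - 1) :: complex) = N - 1" using n by (simp add: N_def of_nat_diff)
  have l1': "l1 = \<kappa> * (a1 * b2 + a2 * b1) / N" using l1 N0 by (simp add: N_def field_simps)
  have l2': "l2 = 2 * \<kappa> * b1 * b2 / (N * (N - 1))"
    using l2 N0 N1 n by (simp add: N_def field_simps of_nat_diff)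
  show ?thesis
    unfolding poly_polar poly_pderiv_polar Bop_def l0 l1' l2' n1 N_def[symmetric]
    using N0 N1 by (simp add: field_simps) (simp add: algebra_simps power2_eq_square)
qed

lemma Bop_eq_polar:
  assumes "degree G \<le> 1"
  shows "Bop l0 l1 l2 1 G z = poly (polar 1 (z * (l0 + 1 / 2 * l1)) l0 G) z"
proof -
  have "pderiv (pderiv G) = 0"
    using assms by (simp add: pderiv_eq_0_iff degree_pderiv)
  then show ?thesis by (simp add: Bop_def poly_polar algebra_simps)
qed

lemma polar_polar_nonzero_outside_unit_disc:
  fixes G :: "complex poly"
  assumes deg: "degree G = n" and n: "n \<ge> 2" and roots: "\<And>w. poly G w = 0 \<Longrightarrow> cmod w < 1"
    and \<zeta>1: "\<zeta>1 \<noteq> 0" "cmod \<tau>1 \<le> cmod \<zeta>1" and \<zeta>2: "\<zeta>2 \<noteq> 0" "cmod \<tau>2 \<le> cmod \<zeta>2"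
    and x: "1 \<le> cmod x"
  shows "poly (polar (n - 1) \<zeta>2 \<tau>2 (polar n \<zeta>1 \<tau>1 G)) x \<noteq> 0"
proof -
  have "n \<ge> 1" using n by simp
  have "cmod w < 1" if "poly (polar n \<zeta>1 \<tau>1 G) w = 0" for w
    using polar_nonzero_outside_unit_disc[OF deg \<open>n \<ge> 1\<close> roots \<zeta>1, of w] that by force
  then show ?thesis
    using degree_polar[OF deg \<open>n \<ge> 1\<close> roots \<zeta>1] n \<zeta>2 x by (intro polar_nonzero_outside_unit_disc) auto
qed

text \<open>The half-plane condition on the zeros of U is exactly what makes Laguerre's theorem
  applicable to each polar derivative.\<close>
lemma linear_factor_polar_conditions:
  fixes a b z :: complex
  assumes "\<And>w. a + b * w = 0 \<Longrightarrow> cmod w \<le> cmod (w - of_nat n / 2)" and "n \<ge> 1"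
    and "a \<noteq> 0 \<or> b \<noteq> 0" and "1 \<le> cmod z"
  shows "z * (a + of_nat n / 2 * b) \<noteq> 0" and "cmod a \<le> cmod (z * (a + of_nat n / 2 * b))"
proof -
  have "(of_nat n / 2 :: complex) \<noteq> 0" using assms(2) by simp
  then show "z * (a + of_nat n / 2 * b) \<noteq> 0"
    using linear_factor_in_halfplane_nonzero[OF assms(1) _ assms(3)] assms(4) by auto
  have "cmod a \<le> cmod (a + of_nat n / 2 * b)" by (rule linear_factor_in_halfplane) (rule assms(1))
  also have "\<dots> \<le> cmod z * cmod (a + of_nat n / 2 * b)"
    using assms(4) by (simp add: mult_le_cancel_right1)
  finally show "cmod a \<le> cmod (z * (a + of_nat n / 2 * b))" by (simp add: norm_mult)
qed

lemma Bop_nonzero: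
  fixes G :: "complex poly"
  assumes B: "class_B l0 l1 l2 n" and n: "n \<ge> 1" and deg: "degree G = n"
    and roots: "\<And>w. poly G w = 0 \<Longrightarrow> cmod w < 1" and z: "1 \<le> cmod z"
  shows "Bop l0 l1 l2 n G z \<noteq> 0"
proof -
  have root_halfplane: "cmod w \<le> cmod (w - of_nat n / 2)" if "Upoly l0 l1 l2 n w = 0" for w
    using B that by (simp add: class_B_def)
  show ?thesis
  proof (cases "n = 1")
    case True
    have factor: "cmod w \<le> cmod (w - of_nat n / 2)" if "l0 + l1 * w = 0" for w
      using root_halfplane that True by (simp add: Upoly_def)
    have "l0 \<noteq> 0 \<or> l1 \<noteq> 0" using class_B_coeffs_nonzero[OF B n] True by auto
    note conds = linear_factor_polar_conditions[OF factor n this z]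
    have "poly (polar 1 (z * (l0 + 1 / 2 * l1)) l0 G) z \<noteq> 0"
      using polar_nonzero_outside_unit_disc[of G 1] deg True roots conds z by auto
    then show ?thesis using Bop_eq_polar[of G] deg True by simp
  next
    case False
    then have n2: "n \<ge> 2" using n by simp
    obtain \<kappa> a1 b1 a2 b2 where \<kappa>: "\<kappa> \<noteq> 0" and l0: "l0 = \<kappa> * a1 * a2"
      and l1: "of_nat n * l1 = \<kappa> * (a1 * b2 + a2 * b1)" and l2: "of_nat (n * (n - 1)) / 2 * l2 = \<kappa> * b1 * b2"
      and ab1: "a1 \<noteq> 0 \<or> b1 \<noteq> 0" and ab2: "a2 \<noteq> 0 \<or> b2 \<noteq> 0"
      using quadratic_factorization[OF class_B_coeffs_nonzero[OF B n]] by metis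
    have U: "Upoly l0 l1 l2 n w = \<kappa> * (a1 + b1 * w) * (a2 + b2 * w)" for w
      unfolding Upoly_def l0 mult.assoc[of _ l1] mult.assoc[of _ l2] l1 l2 [unfolded mult.assoc]
      by (simp add: algebra_simps power2_eq_square)
    have "cmod w \<le> cmod (w - of_nat n / 2)" if "a1 + b1 * w = 0" for w
      using root_halfplane U that by simp
    note conds1 = linear_factor_polar_conditions[OF this n ab1 z]
    have "cmod w \<le> cmod (w - of_nat n / 2)" if "a2 + b2 * w = 0" for w
      using root_halfplane U that by simp
    note conds2 = linear_factor_polar_conditions[OF this n ab2 z]
    have "poly (polar (n - 1) (z * (a2 + of_nat n / 2 * b2)) a2 (polar n (z * (a1 + of_nat n / 2 * b1)) a1 G)) z \<noteq> 0"
      by (rule polar_polar_nonzero_outside_unit_disc[OF deg n2 roots conds1 conds2 z])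
    moreover have "(of_nat n :: complex) * (of_nat n - 1) \<noteq> 0" using n2 by simp
    ultimately show ?thesis using Bop_eq_polar_polar[OF n2 l0 l1 l2, of G z] \<kappa> by simp
  qed
qed

section \<open>The dominance argument\<close>

lemma poly_eq_0_if_vanishes_on_cball:
  fixes p :: "complex poly"
  assumes "k > 0" and "\<And>u. cmod u \<le> k \<Longrightarrow> poly p u = 0"
  shows "p = 0"
proof (rule ccontr)
  assume "p \<noteq> 0"
  have "of_real ` {0..k} \<subseteq> {x. poly p x = 0}" using assms by auto
  then have "finite (of_real ` {0..k} :: complex set)"
    using poly_roots_finite[OF \<open>p \<noteq> 0\<close>] by (rule finite_subset)
  then have "finite {0..k}" by (rule finite_imageD) (simp add: inj_on_def)
  then show False using infinite_Icc[OF assms(1)] by blast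
qed

text \<open>The argument of \<omega> is chosen so that b and cnj \<omega> d point in the same direction.\<close>
lemma norm_add_le_of_rotated_bound:
  fixes a b c d :: complex
  assumes d: "d \<noteq> 0" and bd: "cmod b \<le> cmod d"
    and bound: "\<And>\<omega>. 1 < cmod \<omega> \<Longrightarrow> cmod (a - \<omega> * c) \<le> cmod (b - cnj \<omega> * d)"
  shows "cmod a + cmod b \<le> cmod c + cmod d"
proof (rule field_le_mult_one_interval)
  fix s :: real assume s: "0 < s" "s < 1"
  define t where "t = 1 / s"
  have t: "1 < t" using s by (simp add: t_def)
  define u where "u = (if b = 0 then 1 else b / of_real (cmod b))"
  have u: "cmod u = 1" "b = u * of_real (cmod b)" by (simp_all add: u_def norm_divide)
  define \<omega> where "\<omega> = of_real t * cnj u * d / of_real (cmod d)"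
  have norm_\<omega>: "cmod \<omega> = t" using t d u by (simp add: \<omega>_def norm_mult norm_divide)
  have "cnj \<omega> * d = of_real t * u * of_real (cmod d)"
    using d by (simp add: \<omega>_def field_simps complex_norm_square[symmetric] power2_eq_square)
  then have "b - cnj \<omega> * d = u * of_real (cmod b - t * cmod d)"
    by (subst u(2)) (simp add: algebra_simps)
  moreover have "cmod b - t * cmod d \<le> 0"
    using bd t mult_right_mono[of 1 t "cmod d"] by simp
  ultimately have "cmod (b - cnj \<omega> * d) = t * cmod d - cmod b"
    using u by (simp only: norm_mult norm_of_real abs_of_nonpos) simp
  moreover have "cmod a - t * cmod c \<le> cmod (a - \<omega> * c)"
    using norm_triangle_ineq2[of a "\<omega> * c"] norm_\<omega> by (simp add: norm_mult)
  ultimately have "cmod a + cmod b \<le> t * cmod c + t * cmod d" using bound[of \<omega>] norm_\<omega> t by linarith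
  then show "s * (cmod a + cmod b) \<le> cmod c + cmod d" using s by (simp add: t_def field_simps)
qed

locale dilation_setting =
  fixes l0 l1 l2 :: complex and n :: nat and k R r :: real and \<Phi> z :: complex
  assumes class_B: "class_B l0 l1 l2 n" and n: "1 \<le> n" and k: "0 < k" and R: "r < R" and r: "k \<le> r"
    and \<Phi>: "cmod \<Phi> \<le> ((R + k) / (r + k)) ^ n" and z: "1 \<le> cmod z"
begin

definition L :: "complex poly \<Rightarrow> complex" where
  "L f = Bop l0 l1 l2 n (dilation_comb R r \<Phi> f) z"

lemma L_diff: "L (f - g) = L f - L g"
  by (simp add: L_def dilation_comb_diff Bop_diff)

lemma L_smult: "L (smult c f) = c * L f"
  by (simp add: L_def dilation_comb_smult Bop_smult)

lemma L_const: "L [:c:] = c * L [:1:]"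
  by (simp add: L_def dilation_comb_const Bop_const)

lemma L_0: "L 0 = 0"
  using L_smult[of 0 0] by simp

lemma L_eq: "L f = Bop l0 l1 l2 n (f \<circ>\<^sub>p [:0, of_real R:]) z + \<Phi> * Bop l0 l1 l2 n (f \<circ>\<^sub>p [:0, of_real r:]) z"
  by (simp add: L_def dilation_comb_def Bop_add Bop_smult)

lemma norm_L_reflect_circle:
  "cmod (L (reflect_circle k n P)) = k ^ n *
     cmod (Bop l0 l1 l2 n (reflect_conj n P \<circ>\<^sub>p [:0, of_real (R / k^2):]) z
       + \<Phi> * Bop l0 l1 l2 n (reflect_conj n P \<circ>\<^sub>p [:0, of_real (r / k^2):]) z)"
proof -
  have "L (reflect_circle k n P) = of_real (k ^ n) *
      (Bop l0 l1 l2 n (reflect_conj n P \<circ>\<^sub>p [:0, of_real (R / k^2):]) z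
       + \<Phi> * Bop l0 l1 l2 n (reflect_conj n P \<circ>\<^sub>p [:0, of_real (r / k^2):]) z)"
    using k by (simp add: L_eq pcompose_reflect_circle Bop_smult algebra_simps)
  then show ?thesis using k by (simp add: norm_mult norm_power)
qed

lemma norm_L_1: "cmod (L [:1:]) = cmod l0 * cmod (1 + \<Phi>)"
  by (simp add: L_def dilation_comb_const Bop_const norm_mult)

lemma norm_L_monom:
  "cmod (L (monom 1 n)) = cmod (Bop l0 l1 l2 n (monom 1 n) z) * cmod (of_real (R ^ n) + of_real (r ^ n) * \<Phi>)"
  by (simp add: L_def dilation_comb_monom Bop_smult norm_mult)

lemma L_nonzero:
  assumes "degree F = n" and "\<And>w. poly F w = 0 \<Longrightarrow> cmod w < k"
  shows "L F \<noteq> 0"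
proof -
  have "degree (dilation_comb R r \<Phi> F) = n" by (rule degree_dilation_comb[OF assms(1) n k R r \<Phi>])
  moreover have "cmod w < 1" if "poly (dilation_comb R r \<Phi> F) w = 0" for w
    by (rule dilation_comb_roots_in_unit_disc[OF assms(1) n assms(2) k R r \<Phi> that])
  ultimately show ?thesis unfolding L_def using Bop_nonzero[OF class_B n _ _ z] by blast
qed

text \<open>If |L f| > |L F|, then F' = f - \<mu> F with \<mu> = L f / L F has all its zeros in |w| < k,
  since |f| \<le> |F| < |\<mu> F| outside, and yet L F' = 0.\<close>
lemma norm_L_le_of_dominated:
  assumes f: "degree f \<le> n" and F: "degree F = n" and roots: "\<And>w. poly F w = 0 \<Longrightarrow> cmod w < k"
    and dom: "\<And>w. k \<le> cmod w \<Longrightarrow> cmod (poly f w) \<le> cmod (poly F w)"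
    and coeff: "cmod (coeff f n) \<le> cmod (coeff F n)"
  shows "cmod (L f) \<le> cmod (L F)"
proof (rule ccontr)
  assume "\<not> ?thesis"
  then have less: "cmod (L F) < cmod (L f)" by simp
  have LF: "L F \<noteq> 0" by (rule L_nonzero[OF F roots])
  define \<mu> where "\<mu> = L f / L F"
  have \<mu>: "1 < cmod \<mu>" using less LF by (simp add: \<mu>_def norm_divide)
  define F' where "F' = f - smult \<mu> F"
  have "coeff F n \<noteq> 0" using F n by (metis leading_coeff_0_iff degree_0 not_one_le_zero)
  then have "cmod (coeff F n) < cmod \<mu> * cmod (coeff F n)" using \<mu> by simp
  then have "cmod (coeff f n) < cmod (\<mu> * coeff F n)" using coeff by (simp add: norm_mult)
  then have "coeff F' n \<noteq> 0" unfolding F'_def by auto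
  moreover have "degree F' \<le> n"
    unfolding F'_def using f F by (intro degree_diff_le) (auto intro: order.trans[OF degree_smult_le])
  ultimately have deg': "degree F' = n" by (intro antisym le_degree)
  have roots': "cmod w < k" if "poly F' w = 0" for w
  proof (rule ccontr)
    assume "\<not> cmod w < k"
    then have w: "k \<le> cmod w" by simp
    have "poly f w = \<mu> * poly F w" using that unfolding F'_def by simp
    moreover have "poly F w \<noteq> 0" using roots w by force
    ultimately have "cmod (poly F w) < cmod (poly f w)" using \<mu> by (simp add: norm_mult)
    then show False using dom[OF w] by simp
  qed
  have "L F' = 0" using LF unfolding F'_def L_diff L_smult \<mu>_def by simp
  then show False using L_nonzero[OF deg' roots'] by simp
qed

lemma norm_L_le_monom:
  assumes M: "0 < M" and f: "degree f \<le> n"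
    and bound: "\<And>u. cmod u \<le> k \<Longrightarrow> cmod (poly (reflect_circle k n f) u) \<le> M"
  shows "cmod (L f) \<le> M / k ^ n * cmod (L (monom 1 n))"
proof -
  define F :: "complex poly" where "F = smult (of_real (M / k ^ n)) (monom 1 n)"
  have deg: "degree F = n" using M k by (simp add: F_def degree_monom_eq)
  have norm_F: "cmod (poly F w) = (cmod w / k) ^ n * M" for w
    using M k by (simp add: F_def poly_monom norm_mult norm_power norm_divide power_divide)
  have "cmod (L f) \<le> cmod (L F)"
  proof (rule norm_L_le_of_dominated[OF f deg])
    show "cmod w < k" if "poly F w = 0" for w using that M k by (simp add: F_def poly_monom)
    show "cmod (poly f w) \<le> cmod (poly F w)" if "k \<le> cmod w" for w
      unfolding norm_F by (rule norm_poly_le_outside_cball[OF k f bound that])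
    have "cmod (poly (reflect_circle k n f) 0) \<le> M" using bound k by simp
    then show "cmod (coeff f n) \<le> cmod (coeff F n)"
      using M k by (simp add: F_def poly_reflect_circle_0 norm_mult norm_power norm_divide field_simps)
  qed
  also have "cmod (L F) = M / k ^ n * cmod (L (monom 1 n))"
    unfolding F_def L_smult using M k by (simp add: norm_mult norm_divide norm_power)
  finally show ?thesis .
qed

text \<open>Since P - \<omega> M has no zeros in the disc |w| \<le> k, it is dominated by its reflection,
  which is reflect_circle k n P - cnj \<omega> M (w/k)^n.\<close>
lemma norm_L_shift_le:
  assumes M: "0 < M" and P: "degree P \<le> n" and bound: "\<And>u. cmod u \<le> k \<Longrightarrow> cmod (poly P u) \<le> M"
    and \<omega>: "1 < cmod \<omega>"
  shows "cmod (L P - \<omega> * M * L [:1:]) \<le> cmod (L (reflect_circle k n P) - cnj \<omega> * (M / k ^ n) * L (monom 1 n))"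
proof -
  define f where "f = P - [:\<omega> * M:]"
  have f: "degree f \<le> n" unfolding f_def using P by (intro degree_diff_le) auto
  have nz: "poly f u \<noteq> 0" if "cmod u \<le> k" for u
  proof
    assume "poly f u = 0"
    then have "cmod (poly P u) = cmod \<omega> * M" using M by (simp add: f_def norm_mult)
    then show False using bound[OF that] \<omega> M by simp
  qed
  have "cmod (L f) \<le> cmod (L (reflect_circle k n f))"
    using reflect_circle_of_zero_free[OF k f nz] norm_poly_le_reflect_circle[OF k f nz]
      norm_coeff_le_reflect_circle[OF k f nz]
    by (intro norm_L_le_of_dominated[OF f]) auto
  also have "L (reflect_circle k n f) = L (reflect_circle k n P) - cnj \<omega> * (M / k ^ n) * L (monom 1 n)"
    unfolding f_def reflect_circle_diff_const[OF k] L_diff L_smult by simp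
  also have "L f = L P - \<omega> * M * L [:1:]"
    unfolding f_def L_diff by (subst L_const) simp
  finally show ?thesis .
qed

lemma norm_L_add_L_reflect_circle_le:
  assumes P: "degree P \<le> n" and bound: "\<And>w. cmod w = k \<Longrightarrow> cmod (poly P w) \<le> M"
  shows "cmod (L P) + cmod (L (reflect_circle k n P)) \<le> (cmod (L [:1:]) + cmod (L (monom 1 n)) / k ^ n) * M"
proof -
  define S where "S = reflect_circle k n P"
  have "0 \<le> M" using bound[of k] k by (smt (verit) norm_ge_zero norm_of_real)
  have P_disc: "cmod (poly P u) \<le> M" if "cmod u \<le> k" for u
    by (rule norm_poly_le_on_cball[OF k bound that])
  show ?thesis
  proof (cases "M = 0")
    case True
    then have "P = 0" using P_disc k by (intro poly_eq_0_if_vanishes_on_cball[of k]) auto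
    then show ?thesis using True by (simp add: reflect_circle_def reflect_conj_0 L_0)
  next
    case False
    then have M: "0 < M" using \<open>0 \<le> M\<close> by simp
    have degS: "degree S \<le> n" unfolding S_def by (rule degree_reflect_circle)
    have "L (monom 1 n) \<noteq> 0" using k by (intro L_nonzero) (auto simp: degree_monom_eq poly_monom)
    moreover have "cmod (L S) \<le> cmod (M / k ^ n * L (monom 1 n))"
      using norm_L_le_monom[OF M degS] P_disc k M
      by (simp add: S_def reflect_circle_reflect_circle[OF k P] norm_mult norm_divide norm_power)
    ultimately have "cmod (L P) + cmod (L S) \<le> cmod (M * L [:1:]) + cmod (M / k ^ n * L (monom 1 n))"
      using M k norm_L_shift_le[OF M P P_disc]
      by (intro norm_add_le_of_rotated_bound) (auto simp: S_def mult.assoc)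
    then show ?thesis using M k by (simp add: S_def norm_mult norm_divide norm_power field_simps)
  qed
qed

end

theorem lemma1p4:
  fixes n :: nat and k R r :: real and l0 l1 l2 \<alpha> \<beta> z :: complex and P :: "complex poly"
  assumes n: "n \<ge> 1"
    and U: "\<forall>w. Upoly l0 l1 l2 n w = 0 \<longrightarrow> cmod w \<le> cmod (w - of_nat n / 2)"
    and k: "0 < k" "k \<le> 1"
    and P: "degree P \<le> n"
    and a: "cmod \<alpha> \<le> 1" and b: "cmod \<beta> \<le> 1"
    and Rr: "R > r" "r \<ge> k"
    and z: "cmod z \<ge> 1"
  shows "cmod (Bop l0 l1 l2 n (P \<circ>\<^sub>p [:0, of_real R:]) z
               + Phi n k R r \<alpha> \<beta> * Bop l0 l1 l2 n (P \<circ>\<^sub>p [:0, of_real r:]) z)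
         + k^n * cmod (Bop l0 l1 l2 n (reflect_conj n P \<circ>\<^sub>p [:0, of_real (R / k^2):]) z
               + Phi n k R r \<alpha> \<beta> * Bop l0 l1 l2 n (reflect_conj n P \<circ>\<^sub>p [:0, of_real (r / k^2):]) z)
       \<le> (cmod l0 * cmod (1 + Phi n k R r \<alpha> \<beta>)
           + cmod (Bop l0 l1 l2 n (monom 1 n) z) / k^n
             * cmod (of_real (R^n) + of_real (r^n) * Phi n k R r \<alpha> \<beta>))
         * (SUP w\<in>{w. cmod w = k}. cmod (poly P w))"
proof -
  define \<Phi> where "\<Phi> = Phi n k R r \<alpha> \<beta>"
  define M where "M = (SUP w\<in>{w. cmod w = k}. cmod (poly P w))"
  interpret dilation_setting l0 l1 l2 n k R r \<Phi> z
    using n U k Rr z norm_Phi_le[OF k(1) Rr a b]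
    by unfold_locales (simp_all add: class_B_def \<Phi>_def)
  have "bdd_above ((\<lambda>w. cmod (poly P w)) ` sphere 0 k)"
    by (intro bounded_imp_bdd_above compact_imp_bounded compact_continuous_image continuous_intros) simp
  then have "cmod (poly P w) \<le> M" if "cmod w = k" for w
    unfolding M_def using that by (intro cSUP_upper) (auto simp: sphere_def)
  then have "cmod (L P) + cmod (L (reflect_circle k n P))
      \<le> (cmod (L [:1:]) + cmod (L (monom 1 n)) / k ^ n) * M"
    by (rule norm_L_add_L_reflect_circle_le[OF P])
  then show ?thesis
    unfolding norm_L_reflect_circle norm_L_1 norm_L_monom L_eq[of P] by (simp add: \<Phi>_def M_def)
qed

end
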